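(* For every real $p>3$ there exists $n_0=n_0(p)$ such that for all $n\geq n_0$, \[ \phi(2,p,n)>f\bigl(p,T_2(n)\bigr). \]
   Context: For a real number $p>0$ and a finite simple graph $G$, $f(p,G)=\sum_{u\in V(G)} d^p(u)$, where $d(u)$ is the degree of $u$. $\phi(2,p,n)$ is the maximum of $f(p,G)$ over all triangle-free graphs $G$ of order $n$. $T_2(n)$ is the complete bipartite graph on $n$ vertices with parts of sizes $\lceil n/2\rceil$ and $\lfloor n/2\rfloor$. *)

theory Defs
  imports Complex_Main
begin

text \<open>A finite simple graph of order n is represented (up to isomorphism) by vertex set
  {0..<n} and a symmetric irreflexive edge relation E supported on {0..<n}.\<close>

definition simple_graph_on :: "nat \<Rightarrow> (nat \<Rightarrow> nat \<Rightarrow> bool) \<Rightarrow> bool" where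
  "simple_graph_on n E \<longleftrightarrow> (\<forall>u v. E u v \<longrightarrow> u < n \<and> v < n \<and> u \<noteq> v \<and> E v u)"

definition triangle_free :: "(nat \<Rightarrow> nat \<Rightarrow> bool) \<Rightarrow> bool" where
  "triangle_free E \<longleftrightarrow> \<not> (\<exists>u v w. E u v \<and> E v w \<and> E w u)"

definition degree :: "nat \<Rightarrow> (nat \<Rightarrow> nat \<Rightarrow> bool) \<Rightarrow> nat \<Rightarrow> nat" where
  "degree n E u = card {v. v < n \<and> E u v}"

definition fdeg :: "real \<Rightarrow> nat \<Rightarrow> (nat \<Rightarrow> nat \<Rightarrow> bool) \<Rightarrow> real" where
  "fdeg p n E = (\<Sum>u<n. real (degree n E u) powr p)"

definition phi2 :: "real \<Rightarrow> nat \<Rightarrow> real" where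
  "phi2 p n = Max {fdeg p n E | E. simple_graph_on n E \<and> triangle_free E}"

definition T2 :: "nat \<Rightarrow> nat \<Rightarrow> nat \<Rightarrow> bool" where
  "T2 n u v \<longleftrightarrow> u < n \<and> v < n \<and> ((u < (n + 1) div 2) \<longleftrightarrow> \<not> (v < (n + 1) div 2))"

end

theory Submission
  imports Defs "HOL-Real_Asymp.Real_Asymp"
begin

text \<open>All complete bipartite graphs \<open>K\<^sub>s\<^sub>,\<^sub>n\<^sub>-\<^sub>s\<close> are triangle-free, and
  \<open>f(p, K\<^sub>s\<^sub>,\<^sub>n\<^sub>-\<^sub>s) = n\<^sup>p\<^sup>+\<^sup>1 g(s/n)\<close> with \<open>g(x) = x(1-x)\<^sup>p + (1-x)x\<^sup>p\<close>. Expanding around the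
  balanced point, \<open>g((1-u)/2) = g(1/2) + p(p-3) 2\<^sup>-\<^sup>p\<^sup>-\<^sup>1 u\<^sup>2 + o(u\<^sup>2)\<close>, so for \<open>p > 3\<close> the point
  \<open>1/2\<close> is a strict local minimum of \<open>g\<close> and some \<open>\<alpha> \<in> (0,1)\<close> has \<open>g(\<alpha>) > g(1/2)\<close>. By continuity
  of \<open>g\<close>, the complete bipartite graph with parts of sizes \<open>\<lfloor>\<alpha>n\<rfloor>\<close> and \<open>n - \<lfloor>\<alpha>n\<rfloor>\<close> then beats
  \<open>T\<^sub>2(n)\<close> for all large \<open>n\<close>.\<close>

lemma tendsto_div_real_of_bounded_dist:
  fixes x :: "nat \<Rightarrow> real"
  assumes "\<And>n. \<bar>x n - a * real n\<bar> \<le> C"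
  shows "((\<lambda>n. x n / real n) \<longlongrightarrow> a) at_top"
proof -
  have "((\<lambda>n. 1 / real n) \<longlongrightarrow> 0) at_top"
    by real_asymp
  moreover have "eventually (\<lambda>n. norm (x n / real n - a) \<le> norm (1 / real n) * C) at_top"
    using eventually_gt_at_top[of 0]
  proof eventually_elim
    case (elim n)
    then have "x n / real n - a = (x n - a * real n) / real n"
      by (simp add: diff_divide_distrib)
    then have "norm (x n / real n - a) = norm (1 / real n) * \<bar>x n - a * real n\<bar>"
      by (simp add: abs_divide)
    then show ?case
      using divide_right_mono[OF assms[of n], of "real n"] by simp
  qed
  ultimately have "((\<lambda>n. x n / real n - a) \<longlongrightarrow> 0) at_top"
    by (rule tendsto_0_le)
  then show ?thesis
    by (simp add: LIM_zero_iff)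
qed

lemma eventually_less_of_tendsto_isCont:
  assumes "(x \<longlongrightarrow> a) F" "(y \<longlongrightarrow> b) F" "isCont f a" "isCont f b" "f b < (f a :: real)"
  shows "eventually (\<lambda>n. f (y n) < f (x n)) F"
proof -
  have "((\<lambda>n. f (x n) - f (y n)) \<longlongrightarrow> f a - f b) F"
    by (intro tendsto_diff isCont_tendsto_compose[of a f] isCont_tendsto_compose[of b f] assms)
  moreover have "0 < f a - f b"
    using assms(5) by simp
  ultimately have "eventually (\<lambda>n. 0 < f (x n) - f (y n)) F"
    by (rule order_tendstoD(1))
  then show ?thesis
    by eventually_elim simp
qed

definition complete_bipartite :: "nat \<Rightarrow> nat \<Rightarrow> nat \<Rightarrow> nat \<Rightarrow> bool" where
  "complete_bipartite n s u v \<longleftrightarrow> u < n \<and> v < n \<and> (u < s \<longleftrightarrow> \<not> v < s)"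

lemma T2_eq_complete_bipartite: "T2 n = complete_bipartite n ((n + 1) div 2)"
  by (auto simp: T2_def complete_bipartite_def fun_eq_iff)

lemma simple_graph_on_complete_bipartite: "simple_graph_on n (complete_bipartite n s)"
  by (auto simp: simple_graph_on_def complete_bipartite_def)

lemma triangle_free_complete_bipartite: "triangle_free (complete_bipartite n s)"
  by (auto simp: triangle_free_def complete_bipartite_def)

lemma degree_complete_bipartite:
  assumes "s \<le> n" "u < n"
  shows "degree n (complete_bipartite n s) u = (if u < s then n - s else s)"
proof -
  have "{v. v < n \<and> complete_bipartite n s u v} = (if u < s then {s..<n} else {..<s})"
    using assms by (auto simp: complete_bipartite_def)
  then show ?thesis
    by (simp add: degree_def)
qed

lemma fdeg_complete_bipartite:
  assumes "s \<le> n"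
  shows "fdeg p n (complete_bipartite n s) = real s * real (n - s) powr p + real (n - s) * real s powr p"
proof -
  have "fdeg p n (complete_bipartite n s) = (\<Sum>u<n. if u < s then real (n - s) powr p else real s powr p)"
    unfolding fdeg_def using assms by (intro sum.cong) (simp_all add: degree_complete_bipartite)
  also have "\<dots> = (\<Sum>u<s. real (n - s) powr p) + (\<Sum>u\<in>{s..<n}. real s powr p)"
  proof -
    have "{..<n} \<inter> {u. u < s} = {..<s}" "{..<n} \<inter> - {u. u < s} = {s..<n}"
      using assms by auto
    then show ?thesis
      by (simp only: sum.If_cases[OF finite_lessThan])
  qed
  finally show ?thesis
    by simp
qed

lemma finite_fdeg_triangle_free: "finite {fdeg p n E | E. simple_graph_on n E \<and> triangle_free E}"
proof -
  have "{fdeg p n E | E. simple_graph_on n E \<and> triangle_free E}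
          \<subseteq> (\<lambda>S. fdeg p n (\<lambda>u v. (u, v) \<in> S)) ` Pow ({..<n} \<times> {..<n})"
  proof
    fix x
    assume "x \<in> {fdeg p n E | E. simple_graph_on n E \<and> triangle_free E}"
    then obtain E where "x = fdeg p n E" "simple_graph_on n E"
      by auto
    then show "x \<in> (\<lambda>S. fdeg p n (\<lambda>u v. (u, v) \<in> S)) ` Pow ({..<n} \<times> {..<n})"
      by (intro image_eqI[where x = "{(u, v). E u v}"]) (auto simp: simple_graph_on_def)
  qed
  then show ?thesis
    by (rule finite_subset) simp
qed

lemma fdeg_le_phi2:
  assumes "simple_graph_on n E" "triangle_free E"
  shows "fdeg p n E \<le> phi2 p n"
  unfolding phi2_def using assms by (intro Max_ge[OF finite_fdeg_triangle_free]) blast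

definition complete_bipartite_profile :: "real \<Rightarrow> real \<Rightarrow> real" where
  "complete_bipartite_profile p x = x * (1 - x) powr p + (1 - x) * x powr p"

lemma fdeg_complete_bipartite_profile:
  assumes "s \<le> n"
  shows "fdeg p n (complete_bipartite n s) = real n powr (p + 1) * complete_bipartite_profile p (real s / real n)"
proof (cases "n = 0")
  case True
  then show ?thesis
    using assms by (simp add: fdeg_def)
next
  case False
  define x where "x = real s / real n"
  have s: "real s = real n * x" and ns: "real (n - s) = real n * (1 - x)"
    using False assms by (simp_all add: x_def of_nat_diff field_simps)
  have "0 \<le> x" "x \<le> 1"
    using False assms by (simp_all add: x_def field_simps)
  then have "real s powr p = real n powr p * x powr p" "real (n - s) powr p = real n powr p * (1 - x) powr p"
    unfolding s ns by (simp_all add: powr_mult)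
  then have "real s * real (n - s) powr p + real (n - s) * real s powr p
               = (real n powr p * real n) * complete_bipartite_profile p x"
    unfolding complete_bipartite_profile_def by (simp add: s ns algebra_simps)
  then show ?thesis
    using False assms by (simp add: fdeg_complete_bipartite powr_add x_def)
qed

lemma complete_bipartite_profile_near_half:
  "((\<lambda>u. (complete_bipartite_profile p ((1 - u) / 2) - complete_bipartite_profile p (1 / 2)) / u\<^sup>2)
     \<longlongrightarrow> p * (p - 3) / 2 * (1 / 2) powr p) (at_right 0)"
proof -
  have "((\<lambda>u. (complete_bipartite_profile p ((1 - u) / 2) - complete_bipartite_profile p (1 / 2)) / u\<^sup>2)
          \<longlongrightarrow> p * ((p - 1) * (1 / 2) powr p) / 2 - p * (1 / 2) powr p) (at_right 0)"
    unfolding complete_bipartite_profile_def by real_asymp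
  moreover have "p * ((p - 1) * (1 / 2) powr p) / 2 - p * (1 / 2) powr p = p * (p - 3) / 2 * (1 / 2) powr p"
    by (simp add: field_simps)
  ultimately show ?thesis
    by simp
qed

lemma complete_bipartite_profile_exceeds_half:
  assumes "p > 3"
  obtains \<alpha> where "0 < \<alpha>" "\<alpha> < 1" "complete_bipartite_profile p (1 / 2) < complete_bipartite_profile p \<alpha>"
proof -
  have "p * (p - 3) / 2 * (1 / 2) powr p > 0"
    using assms by simp
  then have "eventually (\<lambda>u. (complete_bipartite_profile p ((1 - u) / 2) - complete_bipartite_profile p (1 / 2)) / u\<^sup>2 > 0)
               (at_right 0)"
    by (rule order_tendstoD(1)[OF complete_bipartite_profile_near_half])
  moreover have "eventually (\<lambda>u::real. 0 < u \<and> u < 1) (at_right 0)"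
    using eventually_at_right_real[of 0 1] by simp
  ultimately have "eventually (\<lambda>u. 0 < u \<and> u < 1 \<and>
                     complete_bipartite_profile p (1 / 2) < complete_bipartite_profile p ((1 - u) / 2)) (at_right 0)"
    by eventually_elim (auto simp: zero_less_divide_iff)
  then obtain u where "0 < u" "u < 1" "complete_bipartite_profile p (1 / 2) < complete_bipartite_profile p ((1 - u) / 2)"
    using eventually_happens' trivial_limit_at_right_real by blast
  then show ?thesis
    by (intro that[of "(1 - u) / 2"]) simp_all
qed

lemma isCont_complete_bipartite_profile: "0 < x \<Longrightarrow> x < 1 \<Longrightarrow> isCont (complete_bipartite_profile p) x"
  unfolding complete_bipartite_profile_def[abs_def] by (intro continuous_intros) auto

lemma fdeg_T2_less_complete_bipartite:
  assumes "0 < n" "s \<le> n"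
    and "complete_bipartite_profile p (real ((n + 1) div 2) / real n) < complete_bipartite_profile p (real s / real n)"
  shows "fdeg p n (T2 n) < fdeg p n (complete_bipartite n s)"
  using assms by (simp add: T2_eq_complete_bipartite fdeg_complete_bipartite_profile)

theorem mainTheorem7:
  fixes p :: real
  assumes "p > 3"
  shows "\<exists>n0::nat. \<forall>n\<ge>n0. phi2 p n > fdeg p n (T2 n)"
proof -
  obtain \<alpha> where \<alpha>: "0 < \<alpha>" "\<alpha> < 1" "complete_bipartite_profile p (1 / 2) < complete_bipartite_profile p \<alpha>"
    using complete_bipartite_profile_exceeds_half[OF assms] .
  define s where "s n = nat \<lfloor>\<alpha> * real n\<rfloor>" for n
  have s_le: "s n \<le> n" for n
    using \<alpha> mult_left_le_one_le[of "real n" \<alpha>] by (simp add: s_def nat_le_iff floor_le_iff)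
  have "((\<lambda>n. real (s n) / real n) \<longlongrightarrow> \<alpha>) at_top"
    using \<alpha> by (intro tendsto_div_real_of_bounded_dist[where C = 1]) (simp add: s_def abs_if, linarith)
  moreover have "((\<lambda>n. real ((n + 1) div 2) / real n) \<longlongrightarrow> 1 / 2) at_top"
    by (intro tendsto_div_real_of_bounded_dist[where C = 1]) (simp add: abs_if, linarith)
  ultimately have "eventually (\<lambda>n. complete_bipartite_profile p (real ((n + 1) div 2) / real n)
                                    < complete_bipartite_profile p (real (s n) / real n)) at_top"
    using \<alpha> by (intro eventually_less_of_tendsto_isCont isCont_complete_bipartite_profile) auto
  then have "eventually (\<lambda>n. fdeg p n (T2 n) < phi2 p n) at_top"
    using eventually_gt_at_top[of 0]
  proof eventually_elim
    case (elim n)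
    then have "fdeg p n (T2 n) < fdeg p n (complete_bipartite n (s n))"
      by (intro fdeg_T2_less_complete_bipartite s_le)
    also have "\<dots> \<le> phi2 p n"
      by (intro fdeg_le_phi2 simple_graph_on_complete_bipartite triangle_free_complete_bipartite)
    finally show ?case .
  qed
  then show ?thesis
    by (simp add: eventually_at_top_linorder)
qed

end
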